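(* Let $\alpha,\beta,\gamma,\delta\in\mathbb{R}$ with $\alpha+\delta\neq 0$ and $\alpha\gamma+\beta\delta=0$, and let $G_5$ be the connected, simply connected Lie group whose Lie algebra $\mathfrak{g}_5$ has a basis $\{e_1,e_2,e_3\}$ with $[e_1,e_2]=0$, $[e_1,e_3]=\alpha e_1+\beta e_2$, $[e_2,e_3]=\gamma e_1+\delta e_2$, equipped with the left-invariant Lorentzian metric $g$ for which $\{e_1,e_2,e_3\}$ is pseudo-orthonormal with $e_3$ timelike, and with the product structure $J$. Let $\lambda_0,c\in\mathbb{R}$. Then there exists a derivation $D$ of $\mathfrak{g}_5$ with $\widetilde{\mathrm{Ric}}^0=(s^0\lambda_0+c)\mathrm{Id}+D$ (i.e. $(G_5,g,J)$ is an algebraic Schouten soliton associated to the canonical connection $\nabla^0$) if and only if $c=0$.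
   Context: Pseudo-orthonormal means $g(e_1,e_1)=g(e_2,e_2)=1$, $g(e_3,e_3)=-1$, $g(e_i,e_j)=0$ for $i\neq j$; left-invariant tensors are identified with their values on $\mathfrak{g}$. $\nabla$ is the Levi-Civita connection of $g$. The product structure $J$ is the left-invariant endomorphism with $Je_1=e_1$, $Je_2=e_2$, $Je_3=-e_3$. The canonical connection is $\nabla^0_XY=\nabla_XY-\frac12(\nabla_XJ)JY$, and the Kobayashi–Nomizu connection is $\nabla^1_XY=\nabla^0_XY-\frac14[(\nabla_YJ)JX-(\nabla_{JY}J)X]$. For $k=0,1$: $R^k(X,Y)Z=\nabla^k_X\nabla^k_YZ-\nabla^k_Y\nabla^k_XZ-\nabla^k_{[X,Y]}Z$; $\rho^k(X,Y)=-g(R^k(X,e_1)Y,e_1)-g(R^k(X,e_2)Y,e_2)+g(R^k(X,e_3)Y,e_3)$; $\widetilde\rho^k(X,Y)=\frac12(\rho^k(X,Y)+\rho^k(Y,X))$; $\widetilde{\mathrm{Ric}}^k$ is defined by $\widetilde\rho^k(X,Y)=g(\widetilde{\mathrm{Ric}}^k(X),Y)$; and $s^k=\widetilde\rho^k(e_1,e_1)+\widetilde\rho^k(e_2,e_2)-\widetilde\rho^k(e_3,e_3)$. A derivation of $\mathfrak{g}$ is a linear map $D$ with $D[X,Y]=[DX,Y]+[X,DY]$. $(G,g,J)$ is an algebraic Schouten soliton associated to $\nabla^k$ (with real constants $\lambda_0,c$) if $\widetilde{\mathrm{Ric}}^k=(s^k\lambda_0+c)\mathrm{Id}+D$ for some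 derivation $D$. *)

theory Defs
  imports "HOL-Analysis.Analysis"
begin

text \<open>The 3-dimensional Lie algebra is modelled as real^3 with basis e 1, e 2, e 3
  (standard basis vectors). Left-invariant tensors are identified with their values
  on the Lie algebra.\<close>

type_synonym vec3 = "real ^ 3"

definition e :: "3 \<Rightarrow> vec3" where
  "e i = axis i 1"

text \<open>Signs of the pseudo-orthonormal basis: g(e1,e1)=g(e2,e2)=1, g(e3,e3)=-1.\<close>
definition eps :: "3 \<Rightarrow> real" where
  "eps i = (if i = 3 then -1 else 1)"

definition gL :: "vec3 \<Rightarrow> vec3 \<Rightarrow> real" where
  "gL X Y = X$1 * Y$1 + X$2 * Y$2 - X$3 * Y$3"

text \<open>Bracket of g_5: [e1,e2]=0, [e1,e3]=a e1 + b e2, [e2,e3]=c e1 + d e2,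
  extended bilinearly and skew-symmetrically.\<close>
definition br5 :: "real \<Rightarrow> real \<Rightarrow> real \<Rightarrow> real \<Rightarrow> vec3 \<Rightarrow> vec3 \<Rightarrow> vec3" where
  "br5 a b c d X Y =
     (X$1 * Y$3 - X$3 * Y$1) *\<^sub>R (a *\<^sub>R e 1 + b *\<^sub>R e 2)
   + (X$2 * Y$3 - X$3 * Y$2) *\<^sub>R (c *\<^sub>R e 1 + d *\<^sub>R e 2)"

text \<open>Levi-Civita connection of the left-invariant metric gL (Koszul formula):
  2 g(nabla_X Y, Z) = g([X,Y],Z) - g([Y,Z],X) + g([Z,X],Y).\<close>
definition LC :: "(vec3 \<Rightarrow> vec3 \<Rightarrow> vec3) \<Rightarrow> vec3 \<Rightarrow> vec3 \<Rightarrow> vec3" where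
  "LC br X Y = (\<Sum>i\<in>UNIV. (eps i * ((gL (br X Y) (e i) - gL (br Y (e i)) X
                                     + gL (br (e i) X) Y) / 2)) *\<^sub>R e i)"

definition Jp :: "vec3 \<Rightarrow> vec3" where
  "Jp X = X$1 *\<^sub>R e 1 + X$2 *\<^sub>R e 2 - X$3 *\<^sub>R e 3"

definition nablaJ :: "(vec3 \<Rightarrow> vec3 \<Rightarrow> vec3) \<Rightarrow> vec3 \<Rightarrow> vec3 \<Rightarrow> vec3" where
  "nablaJ br X Y = LC br X (Jp Y) - Jp (LC br X Y)"

definition nabla0 :: "(vec3 \<Rightarrow> vec3 \<Rightarrow> vec3) \<Rightarrow> vec3 \<Rightarrow> vec3 \<Rightarrow> vec3" where
  "nabla0 br X Y = LC br X Y - (1/2) *\<^sub>R nablaJ br X (Jp Y)"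

definition R0 :: "(vec3 \<Rightarrow> vec3 \<Rightarrow> vec3) \<Rightarrow> vec3 \<Rightarrow> vec3 \<Rightarrow> vec3 \<Rightarrow> vec3" where
  "R0 br X Y Z = nabla0 br X (nabla0 br Y Z) - nabla0 br Y (nabla0 br X Z)
                 - nabla0 br (br X Y) Z"

definition rho0 :: "(vec3 \<Rightarrow> vec3 \<Rightarrow> vec3) \<Rightarrow> vec3 \<Rightarrow> vec3 \<Rightarrow> real" where
  "rho0 br X Y = - gL (R0 br X (e 1) Y) (e 1) - gL (R0 br X (e 2) Y) (e 2)
                 + gL (R0 br X (e 3) Y) (e 3)"

definition rhot0 :: "(vec3 \<Rightarrow> vec3 \<Rightarrow> vec3) \<Rightarrow> vec3 \<Rightarrow> vec3 \<Rightarrow> real" where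
  "rhot0 br X Y = (rho0 br X Y + rho0 br Y X) / 2"

text \<open>The Ricci operator determined by rhot0(X,Y) = g(Ric X, Y)
  (written out via the pseudo-orthonormal basis).\<close>
definition Ric0 :: "(vec3 \<Rightarrow> vec3 \<Rightarrow> vec3) \<Rightarrow> vec3 \<Rightarrow> vec3" where
  "Ric0 br X = (\<Sum>i\<in>UNIV. (eps i * rhot0 br X (e i)) *\<^sub>R e i)"

definition s0 :: "(vec3 \<Rightarrow> vec3 \<Rightarrow> vec3) \<Rightarrow> real" where
  "s0 br = rhot0 br (e 1) (e 1) + rhot0 br (e 2) (e 2) - rhot0 br (e 3) (e 3)"

definition derivation :: "(vec3 \<Rightarrow> vec3 \<Rightarrow> vec3) \<Rightarrow> (vec3 \<Rightarrow> vec3) \<Rightarrow> bool" where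
  "derivation br D \<longleftrightarrow> linear D \<and> (\<forall>X Y. D (br X Y) = br (D X) Y + br X (D Y))"

definition alg_schouten_soliton0 ::
  "(vec3 \<Rightarrow> vec3 \<Rightarrow> vec3) \<Rightarrow> real \<Rightarrow> real \<Rightarrow> bool" where
  "alg_schouten_soliton0 br l0 c \<longleftrightarrow>
     (\<exists>D. derivation br D \<and> (\<forall>X. Ric0 br X = (s0 br * l0 + c) *\<^sub>R X + D X))"

end

theory Submission
  imports Defs
begin

text \<open>On \<open>g\<^sub>5\<close> the canonical connection is
  \<open>\<nabla>\<^sup>0\<^sub>X Y = X\<^sub>3 (\<gamma> - \<beta>)/2 (Y\<^sub>1 e\<^sub>2 - Y\<^sub>2 e\<^sub>1)\<close>. All operators \<open>\<nabla>\<^sup>0\<^sub>X\<close> are multiples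
  of one rotation of the \<open>e\<^sub>1e\<^sub>2\<close>-plane, so they commute, and \<open>\<nabla>\<^sup>0\<^sub>[X,Y] = 0\<close>
  because brackets have no \<open>e\<^sub>3\<close>-component. Hence \<open>\<nabla>\<^sup>0\<close> is flat, the Ricci
  operator and the scalar curvature vanish, and the soliton equation forces \<open>D = -c Id\<close>.
  A multiple \<open>k Id\<close> is a derivation only if \<open>k [X,Y] = 2k [X,Y]\<close>, i.e. \<open>k = 0\<close> or the
  algebra is abelian, and \<open>\<alpha> + \<delta> \<noteq> 0\<close> excludes the latter.\<close>

lemma e_nth [simp]: "e i $ j = (if i = j then 1 else 0)"
  by (simp add: e_def axis_def)

lemma br5_nth_3 [simp]: "br5 a b c d X Y $ 3 = 0"
  by (simp add: br5_def)

lemma bilinear_br5: "bilinear (br5 a b c d)"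
  unfolding bilinear_def linear_iff vec_eq_iff forall_3
  by (simp add: br5_def algebra_simps)

lemma br5_eq_0_iff: "(\<forall>X Y. br5 a b c d X Y = 0) \<longleftrightarrow> a = 0 \<and> b = 0 \<and> c = 0 \<and> d = 0"
proof
  assume "\<forall>X Y. br5 a b c d X Y = 0"
  from this[rule_format, of "e 1" "e 3"] this[rule_format, of "e 2" "e 3"]
  show "a = 0 \<and> b = 0 \<and> c = 0 \<and> d = 0"
    unfolding vec_eq_iff forall_3 by (simp add: br5_def)
qed (simp add: br5_def)

lemma derivation_scaleR_iff:
  assumes "bilinear br"
  shows "derivation br (\<lambda>X. k *\<^sub>R X) \<longleftrightarrow> k = 0 \<or> (\<forall>X Y. br X Y = 0)"
proof -
  have "br (k *\<^sub>R X) Y + br X (k *\<^sub>R Y) = k *\<^sub>R br X Y + k *\<^sub>R br X Y" for X Y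
    using assms by (simp add: bilinear_lmul bilinear_rmul)
  then have "derivation br (\<lambda>X. k *\<^sub>R X) \<longleftrightarrow> (\<forall>X Y. k *\<^sub>R br X Y = 0)"
    by (auto simp: derivation_def linear_scaleR)
  then show ?thesis
    by auto
qed

lemma nabla0_br5:
  "nabla0 (br5 a b c d) X Y = (X$3 * (c - b) / 2) *\<^sub>R (Y$1 *\<^sub>R e 2 - Y$2 *\<^sub>R e 1)"
  unfolding vec_eq_iff forall_3
  by (simp add: nabla0_def nablaJ_def LC_def Jp_def gL_def br5_def sum_3 eps_def
      algebra_simps divide_simps)

lemma R0_br5: "R0 (br5 a b c d) X Y Z = 0"
  unfolding R0_def nabla0_br5 vec_eq_iff forall_3
  by (simp add: algebra_simps)

lemma
  assumes "\<And>X Y Z. R0 br X Y Z = 0"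
  shows Ric0_eq_0_if_flat: "Ric0 br X = 0"
    and s0_eq_0_if_flat: "s0 br = 0"
  by (simp_all add: Ric0_def s0_def rhot0_def rho0_def assms gL_def)

theorem theorem4p10:
  fixes \<alpha> \<beta> \<gamma> \<delta> l0 c :: real
  assumes "\<alpha> + \<delta> \<noteq> 0" and "\<alpha> * \<gamma> + \<beta> * \<delta> = 0"
  shows "(\<exists>D. derivation (br5 \<alpha> \<beta> \<gamma> \<delta>) D \<and>
            (\<forall>X. Ric0 (br5 \<alpha> \<beta> \<gamma> \<delta>) X
                 = (s0 (br5 \<alpha> \<beta> \<gamma> \<delta>) * l0 + c) *\<^sub>R X + D X))
         \<longleftrightarrow> c = 0"
proof -
  let ?g = "br5 \<alpha> \<beta> \<gamma> \<delta>"
  have soliton_iff: "(\<forall>X. Ric0 ?g X = (s0 ?g * l0 + c) *\<^sub>R X + D X)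
      \<longleftrightarrow> D = (\<lambda>X. (- c) *\<^sub>R X)" for D
    by (auto simp: Ric0_eq_0_if_flat s0_eq_0_if_flat R0_br5 fun_eq_iff
        eq_neg_iff_add_eq_0 add.commute)
  have "\<not> (\<forall>X Y. ?g X Y = 0)"
    using assms(1) by (simp add: br5_eq_0_iff)
  then have "derivation ?g (\<lambda>X. (- c) *\<^sub>R X) \<longleftrightarrow> c = 0"
    using derivation_scaleR_iff[OF bilinear_br5, of \<alpha> \<beta> \<gamma> \<delta> "- c"] by auto
  then show ?thesis
    by (simp add: soliton_iff)
qed

end
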